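(* Under the standing setup below, for every initial condition $x(0)\in[0,1]^n$ the opinion dynamics converge as $k\to\infty$ to a point $x^*(g,h)\in\mathbb R^n$ that does not depend on $x(0)$. The matrix $E\triangleq I-W+(g-h)\gamma I$ is invertible, and $$x^*(g,h)=E^{-1}\big(I-D-2\beta I+(h-g)\gamma I\big)s+E^{-1}\big((h+g)\beta\mathbf 1+(g^2-h^2)\gamma\mathbf 1\big),$$ where $D=\mathrm{diag}\big(\sum_{j}w_{1j},\dots,\sum_j w_{nj}\big)$ and $\mathbf 1$ is the all-ones vector.
   Context: Standing setup. Fix $n\in\mathbb N$ and $W=[w_{ij}]\in\mathbb R^{n\times n}$ with $w_{ij}\ge 0$ and $w_{ii}=0$. Let $\|W\|_\infty=\max_i\sum_j|w_{ij}|$, $\|W\|_1=\max_j\sum_i|w_{ij}|$, and let $\lambda$ be the spectral radius of $W$; assume there is a vector $c\in\mathbb R^n$ with all entries positive and $W^\top c=\lambda c$. Fix bias parameters $\beta,\gamma\in\mathbb R$ with $\beta\ge\gamma\ge0$ and $1-\max\{\|W\|_\infty,\|W\|_1\}>\max\{2\beta,4\gamma\}$. Fix innate opinions $s=(s_1,\dots,s_n)^\top\in[0,1]^n$, let $\overline s=\max_i s_i$, $\underline s=\min_i s_i$, and fix source opinions $g,h$ with $0\le g\le\underline s\le\overline s\le h\le1$. For $x\in\mathbb R$ set $\overline w(x)=\beta-\gamma|x-h|$, $\underline w(x)=\beta-\gamma|x-g|$, and $\alpha_i(x)=1-\sum_j w_{ij}-\overline w(x)-\underline w(x)$. The opinion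 dynamics are, for $i=1,\dots,n$ and $k\ge0$, $$x_i(k+1)=\alpha_i(x_i(k))s_i+\sum_{j=1}^n w_{ij}x_j(k)+\overline w(x_i(k))\,h+\underline w(x_i(k))\,g.$$ *)

theory Defs
  imports "HOL-Analysis.Analysis"
begin

definition row_sum_norm :: "real^'n^'n \<Rightarrow> real" where
  "row_sum_norm W = Max (range (\<lambda>i. \<Sum>j\<in>UNIV. \<bar>W$i$j\<bar>))"

definition col_sum_norm :: "real^'n^'n \<Rightarrow> real" where
  "col_sum_norm W = Max (range (\<lambda>j. \<Sum>i\<in>UNIV. \<bar>W$i$j\<bar>))"

definition spectral_radius :: "real^'n^'n \<Rightarrow> real" where
  "spectral_radius W = Sup (cmod ` {\<mu>. \<exists>v::complex^'n. v \<noteq> 0 \<and>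
      (\<chi> i j. complex_of_real (W$i$j)) *v v = \<mu> *s v})"

definition wbar :: "real \<Rightarrow> real \<Rightarrow> real \<Rightarrow> real \<Rightarrow> real" where
  "wbar \<beta> \<gamma> h x = \<beta> - \<gamma> * \<bar>x - h\<bar>"

definition wunder :: "real \<Rightarrow> real \<Rightarrow> real \<Rightarrow> real \<Rightarrow> real" where
  "wunder \<beta> \<gamma> g x = \<beta> - \<gamma> * \<bar>x - g\<bar>"

definition alpha :: "real^'n^'n \<Rightarrow> real \<Rightarrow> real \<Rightarrow> real \<Rightarrow> real \<Rightarrow> 'n \<Rightarrow> real \<Rightarrow> real" where
  "alpha W \<beta> \<gamma> g h i x = 1 - (\<Sum>j\<in>UNIV. W$i$j) - wbar \<beta> \<gamma> h x - wunder \<beta> \<gamma> g x"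

definition opinion_step ::
  "real^'n^'n \<Rightarrow> real \<Rightarrow> real \<Rightarrow> real \<Rightarrow> real \<Rightarrow> real^'n \<Rightarrow> real^'n \<Rightarrow> real^'n" where
  "opinion_step W \<beta> \<gamma> g h s x = (\<chi> i.
      alpha W \<beta> \<gamma> g h i (x$i) * s$i + (\<Sum>j\<in>UNIV. W$i$j * x$j)
      + wbar \<beta> \<gamma> h (x$i) * h + wunder \<beta> \<gamma> g (x$i) * g)"

definition opinion_traj ::
  "real^'n^'n \<Rightarrow> real \<Rightarrow> real \<Rightarrow> real \<Rightarrow> real \<Rightarrow> real^'n \<Rightarrow> real^'n \<Rightarrow> nat \<Rightarrow> real^'n" where
  "opinion_traj W \<beta> \<gamma> g h s x0 k = (opinion_step W \<beta> \<gamma> g h s ^^ k) x0"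

definition degree_mat :: "real^'n^'n \<Rightarrow> real^'n^'n" where
  "degree_mat W = (\<chi> i j. if i = j then (\<Sum>k\<in>UNIV. W$i$k) else 0)"

definition ones :: "real^'n" where
  "ones = (\<chi> i. 1)"

end

theory Submission
  imports Defs
begin

text \<open>
  The step map is a contraction for the sup-norm: the coupling term moves by at most
  \<open>\<parallel>W\<parallel>\<^sub>\<infinity>\<close> times the sup-distance, and the source term
  \<open>\<gamma>(\<bar>x\<^sub>i - h\<bar>(s\<^sub>i - h) + \<bar>x\<^sub>i - g\<bar>(s\<^sub>i - g))\<close> is \<open>\<gamma>(h - g)\<close>-Lipschitz in \<open>x\<^sub>i\<close>, where
  \<open>\<gamma>(h - g) + \<parallel>W\<parallel>\<^sub>\<infinity> < 1\<close>. So every trajectory, from any initial condition, converges to a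
  fixed point once one is exhibited. On the box \<open>[g, h]\<^sup>n\<close> the absolute values resolve and the
  step map is affine, \<open>x \<mapsto> r + B x\<close> with \<open>B = W + (h - g)\<gamma> I\<close> nonnegative with row sums
  below 1, and \<open>E = I - B\<close>. A maximum principle for such affine maps makes \<open>E\<close> invertible and
  puts \<open>E\<^sup>-\<^sup>1 r\<close> in the box, because the step map sends the box into itself (each new opinion
  is a convex combination of \<open>s\<^sub>i\<close>, the \<open>x\<^sub>j\<close>, \<open>h\<close> and \<open>g\<close>). Hence \<open>E\<^sup>-\<^sup>1 r\<close> is a fixed point
  of the step map.
\<close>

lemma infnorm_le_cart:
  fixes x :: "real^'n"
  assumes "\<And>i. \<bar>x$i\<bar> \<le> b"
  shows "infnorm x \<le> b"
  unfolding infnorm_cart by (rule cSup_least) (use assms in auto)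

lemma matrix_vector_mult_component_le_infnorm:
  fixes A :: "real^'n^'m"
  shows "\<bar>(A *v x)$i\<bar> \<le> (\<Sum>j\<in>UNIV. \<bar>A$i$j\<bar>) * infnorm x"
proof -
  have "\<bar>(A *v x)$i\<bar> \<le> (\<Sum>j\<in>UNIV. \<bar>A$i$j\<bar> * \<bar>x$j\<bar>)"
    unfolding matrix_vector_mult_def by (simp add: sum_abs[THEN order_trans] abs_mult)
  also have "\<dots> \<le> (\<Sum>j\<in>UNIV. \<bar>A$i$j\<bar> * infnorm x)"
    by (intro sum_mono mult_left_mono component_le_infnorm_cart) simp
  finally show ?thesis by (simp add: sum_distrib_right)
qed

lemma iterates_tendsto_fixed_point:
  fixes f :: "'a::euclidean_space \<Rightarrow> 'a"
  assumes lipschitz: "\<And>x y. infnorm (f x - f y) \<le> L * infnorm (x - y)"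
    and "0 \<le> L" "L < 1" and "f p = p"
  shows "(\<lambda>k. (f ^^ k) x) \<longlonglongrightarrow> p"
proof -
  define C where "C = sqrt DIM('a) * infnorm (x - p)"
  have bound: "infnorm ((f ^^ k) x - p) \<le> L^k * infnorm (x - p)" for k
  proof (induction k)
    case (Suc k)
    have "infnorm ((f ^^ Suc k) x - p) \<le> L * infnorm ((f ^^ k) x - p)"
      using lipschitz[of "(f ^^ k) x" p] \<open>f p = p\<close> by simp
    also have "\<dots> \<le> L^Suc k * infnorm (x - p)"
      using Suc.IH \<open>0 \<le> L\<close> by (simp add: mult_left_mono mult.assoc)
    finally show ?case .
  qed simp
  have le: "norm ((f ^^ k) x - p) \<le> L^k * C" for k
  proof -
    have "norm ((f ^^ k) x - p) \<le> sqrt DIM('a) * infnorm ((f ^^ k) x - p)"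
      by (rule norm_le_infnorm)
    also have "\<dots> \<le> sqrt DIM('a) * (L^k * infnorm (x - p))"
      using bound by (intro mult_left_mono) simp_all
    finally show ?thesis by (simp add: C_def ac_simps)
  qed
  have "(\<lambda>k. L^k * C) \<longlonglongrightarrow> 0"
    using tendsto_mult_right[OF LIMSEQ_realpow_zero[OF \<open>0 \<le> L\<close> \<open>L < 1\<close>], of C] by simp
  then have "(\<lambda>k. (f ^^ k) x - p) \<longlonglongrightarrow> 0"
    by (rule Lim_null_comparison[OF always_eventually[OF allI[OF le]]])
  then show ?thesis by (simp add: LIM_zero_iff)
qed

lemma exists_max_component:
  fixes p :: "'a::linorder^'n"
  obtains m where "\<And>j. p$j \<le> p$m"
proof -
  have "Max (range (\<lambda>j. p$j)) \<in> range (\<lambda>j. p$j)" by (rule Max_in) auto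
  then obtain m where "Max (range (\<lambda>j. p$j)) = p$m" by blast
  moreover have "p$j \<le> Max (range (\<lambda>j. p$j))" for j by (rule Max_ge) auto
  ultimately show ?thesis using that by metis
qed

lemma affine_fixed_point_le:
  fixes B :: "real^'n^'n"
  assumes "\<forall>i j. 0 \<le> B$i$j" "\<forall>i. (\<Sum>j\<in>UNIV. B$i$j) < 1"
    and fixed: "p = r + B *v p" and super: "\<forall>i. (r + B *v vec u)$i \<le> u"
  shows "p$i \<le> u"
proof -
  obtain m where m: "\<And>j. p$j \<le> p$m" using exists_max_component[of p] by blast
  define \<rho> where "\<rho> = (\<Sum>j\<in>UNIV. B$m$j)"
  have "p$m = (r + B *v p)$m"
    using fixed by (rule arg_cong)
  also have "\<dots> = r$m + (\<Sum>j\<in>UNIV. B$m$j * p$j)"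
    by (simp add: matrix_vector_mult_def)
  also have "\<dots> \<le> r$m + \<rho> * p$m"
    unfolding \<rho>_def sum_distrib_right using assms(1) m by (intro add_left_mono sum_mono mult_left_mono) auto
  also have "\<dots> \<le> u + \<rho> * (p$m - u)"
  proof -
    have "(B *v vec u)$m = \<rho> * u"
      by (simp add: \<rho>_def matrix_vector_mult_def sum_distrib_right)
    then show ?thesis using super[rule_format, of m] by (simp add: algebra_simps)
  qed
  finally have "(1 - \<rho>) * (p$m - u) \<le> 0" by (simp add: algebra_simps)
  moreover have "0 < 1 - \<rho>" using assms(2) by (simp add: \<rho>_def)
  ultimately have "p$m \<le> u" by (simp add: mult_le_0_iff)
  then show ?thesis using m[of i] by (rule order_trans[rotated])
qed

lemma matrix_vector_mult_uminus_right:
  fixes B :: "'a::ring_1^'n^'m"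
  shows "B *v (- x) = - (B *v x)"
  by (simp add: matrix_vector_mult_def vec_eq_iff sum_negf)

lemma affine_fixed_point_bounds:
  fixes B :: "real^'n^'n"
  assumes "\<forall>i j. 0 \<le> B$i$j" "\<forall>i. (\<Sum>j\<in>UNIV. B$i$j) < 1"
    and fixed: "p = r + B *v p"
    and "\<forall>i. l \<le> (r + B *v vec l)$i" "\<forall>i. (r + B *v vec u)$i \<le> u"
  shows "l \<le> p$i \<and> p$i \<le> u"
proof
  have "- p = - r + B *v (- p)"
    using fixed by (metis matrix_vector_mult_uminus_right minus_add_distrib)
  moreover have "\<forall>i. (- r + B *v vec (- l))$i \<le> - l"
  proof
    fix i
    show "(- r + B *v vec (- l))$i \<le> - l"
      using assms(4)[rule_format, of i] by (simp add: vec_neg matrix_vector_mult_uminus_right)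
  qed
  ultimately have "(- p)$i \<le> - l"
    by (rule affine_fixed_point_le[OF assms(1,2)])
  then show "l \<le> p$i" by simp
  show "p$i \<le> u" by (rule affine_fixed_point_le[OF assms(1,2) fixed assms(5)])
qed

lemma invertible_id_minus_substochastic:
  fixes B :: "real^'n^'n"
  assumes "\<forall>i j. 0 \<le> B$i$j" "\<forall>i. (\<Sum>j\<in>UNIV. B$i$j) < 1"
  shows "invertible (mat 1 - B)"
  unfolding invertible_left_inverse matrix_left_invertible_ker
proof (intro allI impI)
  fix v :: "real^'n"
  assume "(mat 1 - B) *v v = 0"
  then have "v = 0 + B *v v" by (simp add: matrix_vector_mult_diff_rdistrib)
  then have "0 \<le> v$i \<and> v$i \<le> 0" for i
    using assms by (intro affine_fixed_point_bounds[where l = 0 and u = 0]) auto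
  then show "v = 0" by (simp add: vec_eq_iff order_antisym)
qed

lemma matrix_inv_right_cancel:
  fixes A :: "real^'n^'n"
  assumes "invertible A"
  shows "A *v (matrix_inv A *v v) = v"
proof -
  have "A ** matrix_inv A = mat 1"
    using assms unfolding invertible_def matrix_inv_def by (rule someI_ex[THEN conjunct1])
  then show ?thesis by (metis matrix_vector_mul_assoc matrix_vector_mul_lid)
qed

lemma row_abs_sum_le_row_sum_norm:
  fixes W :: "real^'n^'n"
  shows "(\<Sum>j\<in>UNIV. \<bar>W$i$j\<bar>) \<le> row_sum_norm W"
  unfolding row_sum_norm_def by (rule Max_ge) auto

lemma dist_to_ends_lipschitz:
  fixes a b g h \<sigma> :: real
  assumes "g \<le> \<sigma>" "\<sigma> \<le> h"
  shows "\<bar>(\<bar>a - h\<bar> - \<bar>b - h\<bar>) * (\<sigma> - h) + (\<bar>a - g\<bar> - \<bar>b - g\<bar>) * (\<sigma> - g)\<bar> \<le> (h - g) * \<bar>a - b\<bar>"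
proof -
  have "\<bar>\<bar>a - h\<bar> - \<bar>b - h\<bar>\<bar> \<le> \<bar>a - b\<bar>" "\<bar>\<bar>a - g\<bar> - \<bar>b - g\<bar>\<bar> \<le> \<bar>a - b\<bar>"
    by linarith+
  then have "\<bar>(\<bar>a - h\<bar> - \<bar>b - h\<bar>) * (\<sigma> - h)\<bar> \<le> \<bar>a - b\<bar> * (h - \<sigma>)"
    and "\<bar>(\<bar>a - g\<bar> - \<bar>b - g\<bar>) * (\<sigma> - g)\<bar> \<le> \<bar>a - b\<bar> * (\<sigma> - g)"
    using assms by (simp_all add: abs_mult mult_right_mono)
  then have "\<bar>(\<bar>a - h\<bar> - \<bar>b - h\<bar>) * (\<sigma> - h) + (\<bar>a - g\<bar> - \<bar>b - g\<bar>) * (\<sigma> - g)\<bar>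
      \<le> \<bar>a - b\<bar> * (h - \<sigma>) + \<bar>a - b\<bar> * (\<sigma> - g)"
    by (rule order_trans[OF abs_triangle_ineq add_mono])
  also have "\<dots> = (h - g) * \<bar>a - b\<bar>"
    by (simp add: algebra_simps)
  finally show ?thesis .
qed

lemma opinion_step_nth:
  "opinion_step W \<beta> \<gamma> g h s x $ i =
     (1 - (\<Sum>j\<in>UNIV. W$i$j) - 2*\<beta>) * s$i + (h + g) * \<beta>
     + \<gamma> * (\<bar>x$i - h\<bar> * (s$i - h) + \<bar>x$i - g\<bar> * (s$i - g)) + (W *v x)$i"
  by (simp add: opinion_step_def alpha_def wbar_def wunder_def matrix_vector_mult_def algebra_simps)

lemma opinion_step_lipschitz:
  fixes W :: "real^'n^'n"
  assumes "0 \<le> \<gamma>" and s_between: "\<forall>i. g \<le> s$i \<and> s$i \<le> h"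
  shows "infnorm (opinion_step W \<beta> \<gamma> g h s x - opinion_step W \<beta> \<gamma> g h s y)
    \<le> (\<gamma> * (h - g) + row_sum_norm W) * infnorm (x - y)"
proof (rule infnorm_le_cart)
  fix i
  define \<delta> where "\<delta> = (\<bar>x$i - h\<bar> - \<bar>y$i - h\<bar>) * (s$i - h) + (\<bar>x$i - g\<bar> - \<bar>y$i - g\<bar>) * (s$i - g)"
  have "g \<le> h" using s_between by (meson order_trans)
  have "\<bar>\<gamma> * \<delta>\<bar> \<le> \<gamma> * ((h - g) * \<bar>x$i - y$i\<bar>)"
    unfolding \<delta>_def using assms dist_to_ends_lipschitz[of g "s$i" h "x$i" "y$i"]
    by (simp add: abs_mult mult_left_mono)
  also have "\<dots> \<le> \<gamma> * (h - g) * infnorm (x - y)"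
    using \<open>0 \<le> \<gamma>\<close> \<open>g \<le> h\<close> component_le_infnorm_cart[of "x - y" i]
    by (simp add: mult.assoc mult_left_mono)
  finally have source: "\<bar>\<gamma> * \<delta>\<bar> \<le> \<gamma> * (h - g) * infnorm (x - y)" .
  have coupling: "\<bar>(W *v (x - y))$i\<bar> \<le> row_sum_norm W * infnorm (x - y)"
    by (rule order_trans[OF matrix_vector_mult_component_le_infnorm])
      (simp add: mult_right_mono infnorm_pos_le row_abs_sum_le_row_sum_norm)
  have "(opinion_step W \<beta> \<gamma> g h s x - opinion_step W \<beta> \<gamma> g h s y)$i = \<gamma> * \<delta> + (W *v (x - y))$i"
    by (simp add: \<delta>_def opinion_step_nth matrix_vector_mult_diff_distrib algebra_simps)
  then have "\<bar>(opinion_step W \<beta> \<gamma> g h s x - opinion_step W \<beta> \<gamma> g h s y)$i\<bar>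
      \<le> \<bar>\<gamma> * \<delta>\<bar> + \<bar>(W *v (x - y))$i\<bar>"
    by (simp only: abs_triangle_ineq)
  also have "\<dots> \<le> (\<gamma> * (h - g) + row_sum_norm W) * infnorm (x - y)"
    using add_mono[OF source coupling] by (simp add: distrib_right)
  finally show "\<bar>(opinion_step W \<beta> \<gamma> g h s x - opinion_step W \<beta> \<gamma> g h s y)$i\<bar>
    \<le> (\<gamma> * (h - g) + row_sum_norm W) * infnorm (x - y)" .
qed

definition opinion_gain :: "real^'n^'n \<Rightarrow> real \<Rightarrow> real \<Rightarrow> real \<Rightarrow> real^'n^'n" where
  "opinion_gain W \<gamma> g h = W + ((h - g) * \<gamma>) *\<^sub>R mat 1"

definition opinion_offset :: "real^'n^'n \<Rightarrow> real \<Rightarrow> real \<Rightarrow> real \<Rightarrow> real \<Rightarrow> real^'n \<Rightarrow> real^'n" where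
  "opinion_offset W \<beta> \<gamma> g h s =
     (mat 1 - degree_mat W - (2 * \<beta>) *\<^sub>R mat 1 + ((h - g) * \<gamma>) *\<^sub>R mat 1) *v s
     + (((h + g) * \<beta>) *\<^sub>R ones + ((g^2 - h^2) * \<gamma>) *\<^sub>R ones)"

lemma scaleR_mat_one_mult: "((c *\<^sub>R mat 1) *v x) = c *\<^sub>R (x :: real^'n)"
  by (metis matrix_vector_mul_lid scaleR_matrix_vector_assoc)

lemma degree_mat_mult_nth: "(degree_mat W *v x)$i = (\<Sum>j\<in>UNIV. W$i$j) * x$i"
  by (simp add: matrix_vector_mult_def degree_mat_def if_distrib[of "\<lambda>u. u * _"] cong: if_cong)

lemma opinion_offset_nth:
  "opinion_offset W \<beta> \<gamma> g h s $ i =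
     (1 - (\<Sum>j\<in>UNIV. W$i$j) - 2*\<beta> + (h - g) * \<gamma>) * s$i + (h + g) * \<beta> + (g^2 - h^2) * \<gamma>"
  by (simp add: opinion_offset_def ones_def matrix_vector_mult_add_rdistrib
      matrix_vector_mult_diff_rdistrib scaleR_mat_one_mult degree_mat_mult_nth algebra_simps)

lemma opinion_gain_mult_nth: "(opinion_gain W \<gamma> g h *v x)$i = (W *v x)$i + (h - g) * \<gamma> * x$i"
  by (simp add: opinion_gain_def matrix_vector_mult_add_rdistrib scaleR_mat_one_mult)

lemma opinion_gain_row_sum: "(\<Sum>j\<in>UNIV. opinion_gain W \<gamma> g h $ i $ j) = (\<Sum>j\<in>UNIV. W$i$j) + (h - g) * \<gamma>"
  by (simp add: opinion_gain_def mat_def sum.distrib if_distrib[of "\<lambda>u. _ * u"] cong: if_cong)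

lemma opinion_step_on_box:
  assumes "\<forall>i. g \<le> x$i \<and> x$i \<le> h"
  shows "opinion_step W \<beta> \<gamma> g h s x = opinion_offset W \<beta> \<gamma> g h s + opinion_gain W \<gamma> g h *v x"
proof -
  have "opinion_step W \<beta> \<gamma> g h s x $ i = (opinion_offset W \<beta> \<gamma> g h s + opinion_gain W \<gamma> g h *v x) $ i" for i
  proof -
    have "\<bar>x$i - h\<bar> = h - x$i" "\<bar>x$i - g\<bar> = x$i - g" using assms by auto
    then show ?thesis
      by (simp add: opinion_step_nth opinion_offset_nth opinion_gain_mult_nth algebra_simps power2_eq_square)
  qed
  then show ?thesis by (simp add: vec_eq_iff)
qed

locale opinion_dynamics =
  fixes W :: "real^'n^'n" and \<beta> \<gamma> g h :: real and s :: "real^'n"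
  assumes W_nonneg: "\<forall>i j. 0 \<le> W$i$j"
    and gamma_nonneg: "0 \<le> \<gamma>" and gamma_le_beta: "\<gamma> \<le> \<beta>"
    and sources: "0 \<le> g" "h \<le> 1"
    and s_between: "\<forall>i. g \<le> s$i \<and> s$i \<le> h"
    and row_sum_bounds: "row_sum_norm W + 2*\<beta> < 1" "row_sum_norm W + \<gamma> < 1"
begin

lemma g_le_h: "g \<le> h"
  using s_between by (meson order_trans)

lemma source_gap: "0 \<le> \<gamma> * (h - g)" "\<gamma> * (h - g) \<le> \<gamma>"
  using gamma_nonneg g_le_h sources by (simp_all add: mult_right_le_one_le)

lemma row_sum_le: "(\<Sum>j\<in>UNIV. W$i$j) \<le> row_sum_norm W"
  using row_abs_sum_le_row_sum_norm[of W i] W_nonneg by simp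

lemma gain_nonneg: "\<forall>i j. 0 \<le> opinion_gain W \<gamma> g h $ i $ j"
  using W_nonneg source_gap by (simp add: opinion_gain_def mat_def mult.commute)

lemma gain_row_sum_less_one: "\<forall>i. (\<Sum>j\<in>UNIV. opinion_gain W \<gamma> g h $ i $ j) < 1"
proof
  fix i
  show "(\<Sum>j\<in>UNIV. opinion_gain W \<gamma> g h $ i $ j) < 1"
    using row_sum_le[of i] row_sum_bounds source_gap by (simp add: opinion_gain_row_sum mult.commute)
qed

lemma step_in_box:
  assumes x_box: "\<forall>j. g \<le> x$j \<and> x$j \<le> h"
  shows "g \<le> opinion_step W \<beta> \<gamma> g h s x $ i \<and> opinion_step W \<beta> \<gamma> g h s x $ i \<le> h"
proof -
  define a where "a = alpha W \<beta> \<gamma> g h i (x$i)"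
  define u where "u = wbar \<beta> \<gamma> h (x$i)"
  define w where "w = wunder \<beta> \<gamma> g (x$i)"
  define y where "y = opinion_step W \<beta> \<gamma> g h s x $ i"
  have y: "y = a * s$i + (\<Sum>j\<in>UNIV. W$i$j * x$j) + u * h + w * g"
    by (simp add: y_def a_def u_def w_def opinion_step_def)
  have weights: "a + (\<Sum>j\<in>UNIV. W$i$j) + u + w = 1"
    by (simp add: a_def u_def w_def alpha_def)
  have coupling_shift: "(\<Sum>j\<in>UNIV. W$i$j * (x$j - c)) = (\<Sum>j\<in>UNIV. W$i$j * x$j) - (\<Sum>j\<in>UNIV. W$i$j) * c"
    for c by (simp add: right_diff_distrib sum_subtractf sum_distrib_right)
  have "\<bar>x$i - h\<bar> \<le> h - g" "\<bar>x$i - g\<bar> \<le> h - g"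
    using x_box by auto
  then have "\<gamma> * \<bar>x$i - h\<bar> \<le> \<beta>" "\<gamma> * \<bar>x$i - g\<bar> \<le> \<beta>"
    using gamma_nonneg gamma_le_beta source_gap mult_left_mono by (metis order_trans)+
  then have "0 \<le> u" "0 \<le> w" by (simp_all add: u_def w_def wbar_def wunder_def)
  have "0 \<le> \<gamma> * \<bar>x$i - h\<bar>" "0 \<le> \<gamma> * \<bar>x$i - g\<bar>"
    using gamma_nonneg by simp_all
  then have "0 \<le> a"
    using row_sum_le[of i] row_sum_bounds by (simp add: a_def alpha_def wbar_def wunder_def)
  have "y - h = y - (a + (\<Sum>j\<in>UNIV. W$i$j) + u + w) * h"
    using weights by simp
  also have "\<dots> = a * (s$i - h) + (\<Sum>j\<in>UNIV. W$i$j * (x$j - h)) + w * (g - h)"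
    unfolding y coupling_shift by (simp add: algebra_simps)
  also have "\<dots> \<le> 0"
    using \<open>0 \<le> a\<close> \<open>0 \<le> w\<close> W_nonneg s_between x_box g_le_h
    by (intro add_nonpos_nonpos sum_nonpos mult_nonneg_nonpos) auto
  finally have "y \<le> h" by simp
  have "y - g = y - (a + (\<Sum>j\<in>UNIV. W$i$j) + u + w) * g"
    using weights by simp
  also have "\<dots> = a * (s$i - g) + (\<Sum>j\<in>UNIV. W$i$j * (x$j - g)) + u * (h - g)"
    unfolding y coupling_shift by (simp add: algebra_simps)
  also have "\<dots> \<ge> 0"
    using \<open>0 \<le> a\<close> \<open>0 \<le> u\<close> W_nonneg s_between x_box g_le_h
    by (intro add_nonneg_nonneg sum_nonneg mult_nonneg_nonneg) auto
  finally show ?thesis using \<open>y \<le> h\<close> by (simp add: y_def)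
qed

definition equilibrium :: "real^'n" where
  "equilibrium = matrix_inv (mat 1 - opinion_gain W \<gamma> g h) *v opinion_offset W \<beta> \<gamma> g h s"

lemma invertible_id_minus_gain: "invertible (mat 1 - opinion_gain W \<gamma> g h)"
  using gain_nonneg gain_row_sum_less_one by (rule invertible_id_minus_substochastic)

lemma equilibrium_affine_fixed_point:
  "equilibrium = opinion_offset W \<beta> \<gamma> g h s + opinion_gain W \<gamma> g h *v equilibrium"
  using matrix_inv_right_cancel[OF invertible_id_minus_gain, of "opinion_offset W \<beta> \<gamma> g h s"]
  by (simp add: equilibrium_def[symmetric] matrix_vector_mult_diff_rdistrib algebra_simps)

lemma equilibrium_in_box: "\<forall>i. g \<le> equilibrium $ i \<and> equilibrium $ i \<le> h"
proof -
  have "g \<le> (opinion_offset W \<beta> \<gamma> g h s + opinion_gain W \<gamma> g h *v vec c)$i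
      \<and> (opinion_offset W \<beta> \<gamma> g h s + opinion_gain W \<gamma> g h *v vec c)$i \<le> h"
    if "g \<le> c" "c \<le> h" for c i
    using step_in_box[of "vec c" i] that by (simp add: opinion_step_on_box)
  then show ?thesis
    using g_le_h
    by (intro allI affine_fixed_point_bounds[OF gain_nonneg gain_row_sum_less_one
          equilibrium_affine_fixed_point]) auto
qed

lemma step_equilibrium: "opinion_step W \<beta> \<gamma> g h s equilibrium = equilibrium"
  using equilibrium_in_box equilibrium_affine_fixed_point by (simp add: opinion_step_on_box)

lemma opinion_traj_tendsto_equilibrium: "opinion_traj W \<beta> \<gamma> g h s x0 \<longlonglongrightarrow> equilibrium"
  unfolding opinion_traj_def
proof (rule iterates_tendsto_fixed_point)
  show "infnorm (opinion_step W \<beta> \<gamma> g h s x - opinion_step W \<beta> \<gamma> g h s y)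
    \<le> (\<gamma> * (h - g) + row_sum_norm W) * infnorm (x - y)" for x y
    using gamma_nonneg s_between by (rule opinion_step_lipschitz)
  have "0 \<le> row_sum_norm W"
    by (rule order_trans[OF sum_nonneg row_abs_sum_le_row_sum_norm]) simp
  then show "0 \<le> \<gamma> * (h - g) + row_sum_norm W"
    using source_gap by linarith
  show "\<gamma> * (h - g) + row_sum_norm W < 1"
    using source_gap row_sum_bounds by linarith
  show "opinion_step W \<beta> \<gamma> g h s equilibrium = equilibrium"
    by (rule step_equilibrium)
qed

end

theorem theorem1:
  fixes W :: "real^'n^'n" and c s :: "real^'n" and lam \<beta> \<gamma> g h :: real
  assumes W_nonneg: "\<forall>i j. W$i$j \<ge> 0"
    and W_diag: "\<forall>i. W$i$i = 0"
    and lam: "lam = spectral_radius W"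
    and c_pos: "\<forall>i. c$i > 0"
    and c_eig: "transpose W *v c = lam *s c"
    and bias: "\<beta> \<ge> \<gamma>" "\<gamma> \<ge> 0"
    and norm_bound: "1 - max (row_sum_norm W) (col_sum_norm W) > max (2*\<beta>) (4*\<gamma>)"
    and s_range: "\<forall>i. 0 \<le> s$i \<and> s$i \<le> 1"
    and g_h: "0 \<le> g" "g \<le> Min (range (\<lambda>i. s$i))"
             "Max (range (\<lambda>i. s$i)) \<le> h" "h \<le> 1"
  shows "invertible (mat 1 - W + ((g - h) * \<gamma>) *\<^sub>R mat 1)
    \<and> (\<forall>x0 :: real^'n. (\<forall>i. 0 \<le> x0$i \<and> x0$i \<le> 1) \<longrightarrow>
        opinion_traj W \<beta> \<gamma> g h s x0 \<longlonglongrightarrow>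
          (matrix_inv (mat 1 - W + ((g - h) * \<gamma>) *\<^sub>R mat 1) *v
             ((mat 1 - degree_mat W - (2 * \<beta>) *\<^sub>R mat 1 + ((h - g) * \<gamma>) *\<^sub>R mat 1) *v s)
           + matrix_inv (mat 1 - W + ((g - h) * \<gamma>) *\<^sub>R mat 1) *v
             (((h + g) * \<beta>) *\<^sub>R ones + ((g^2 - h^2) * \<gamma>) *\<^sub>R ones)))"
proof -
  interpret opinion_dynamics W \<beta> \<gamma> g h s
  proof
    show "\<forall>i. g \<le> s$i \<and> s$i \<le> h"
      using g_h(2,3) Min_le[of "range (\<lambda>i. s$i)"] Max_ge[of "range (\<lambda>i. s$i)"] by fastforce
    show "row_sum_norm W + 2*\<beta> < 1" "row_sum_norm W + \<gamma> < 1"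
      using norm_bound bias by linarith+
  qed (use W_nonneg bias g_h in auto)
  have E: "mat 1 - W + ((g - h) * \<gamma>) *\<^sub>R mat 1 = mat 1 - opinion_gain W \<gamma> g h"
    by (simp add: opinion_gain_def algebra_simps flip: scaleR_minus_left)
  show ?thesis
    unfolding E using invertible_id_minus_gain opinion_traj_tendsto_equilibrium
    by (simp add: equilibrium_def opinion_offset_def matrix_vector_right_distrib)
qed

end
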